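(* Let $Z\subset\mathbb{S}_1$ be a finite nonempty set of points. If there is an integer $m\ge 1$ such that $\alpha(mZ)=\alpha((m+1)Z)=\alpha((m+2)Z)=\alpha((m+3)Z)=\alpha((m+4)Z)$, then $Z$ consists of a single point.
   Context: Let $P_1\in\mathbb{P}^2(\mathbb{C})$ be a point and $f\colon\mathbb{S}_1\to\mathbb{P}^2$ the blow-up of $\mathbb{P}^2$ at $P_1$, with exceptional curve $E_1=f^{-1}(P_1)$; let $H$ be the pullback of the class of a line. Let $\mathbb{L}_1=3H-E_1=-K_{\mathbb{S}_1}$. For a finite set $Z\subset\mathbb{S}_1$ with ideal sheaf $\mathcal{I}_Z$ and a positive integer $m$, the initial degree is $\alpha(mZ)=\min\{d\ge 0:\ H^0(\mathbb{S}_1,d\mathbb{L}_1\otimes\mathcal{I}_Z^{(m)})\neq 0\}$, i.e. the least $d$ such that some effective divisor $D\in|d\mathbb{L}_1|$ has multiplicity at least $m$ at every point of $Z$. *)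

theory Defs
  imports Complex_Main
begin

text \<open>Coordinates: P1 = [0:0:1] in P^2 (WLOG, by a projective change of coordinates).
A section of d*L1 = d(3H - E1) is a homogeneous cubic-degree form F of degree 3d in x,y,z
with multiplicity at least d at P1; it is encoded by its coefficient function
c i j k (coefficient of x^i y^j z^k).\<close>

definition sect :: "nat \<Rightarrow> (nat \<Rightarrow> nat \<Rightarrow> nat \<Rightarrow> complex) \<Rightarrow> bool" where
  "sect d c \<longleftrightarrow> (\<forall>i j k. c i j k \<noteq> 0 \<longrightarrow> i + j + k = 3 * d \<and> d \<le> i + j)"

text \<open>Points of S1: points of P^2 other than P1 (normalised representatives), and points
of the exceptional curve E1 = tangent directions [a:b] at P1 (normalised).\<close>

datatype s1pt = Base "complex \<times> complex \<times> complex" | Exc "complex \<times> complex"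

definition normP2 :: "complex \<times> complex \<times> complex \<Rightarrow> bool" where
  "normP2 p \<longleftrightarrow> (case p of (x, y, z) \<Rightarrow>
      x = 1 \<or> (x = 0 \<and> y = 1) \<or> (x = 0 \<and> y = 0 \<and> z = 1))"

definition normP1 :: "complex \<times> complex \<Rightarrow> bool" where
  "normP1 q \<longleftrightarrow> (case q of (a, b) \<Rightarrow> a = 1 \<or> (a = 0 \<and> b = 1))"

fun valid_pt :: "s1pt \<Rightarrow> bool" where
  "valid_pt (Base p) \<longleftrightarrow> normP2 p \<and> p \<noteq> (0, 0, 1)"
| "valid_pt (Exc q) \<longleftrightarrow> normP1 q"

text \<open>mult_ge d c m q: the divisor D = f^*F - d E1 of the section c of d*L1 has
multiplicity at least m at q.  Off E1 this is the multiplicity of F at the point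
(all Taylor coefficients of F(p + w) of degree < m vanish).  On E1 we use the blow-up
charts (u,v) \<mapsto> (u, u v) and (u,w) \<mapsto> (u w, u) of the affine chart z = 1, where the local
equation of D is u^(-d) F(u, u v, 1), resp. u^(-d) F(u w, u, 1).\<close>

fun mult_ge :: "nat \<Rightarrow> (nat \<Rightarrow> nat \<Rightarrow> nat \<Rightarrow> complex) \<Rightarrow> nat \<Rightarrow> s1pt \<Rightarrow> bool" where
  "mult_ge d c m (Base (p1, p2, p3)) \<longleftrightarrow>
     (\<forall>a b e. a + b + e < m \<longrightarrow>
        (\<Sum>i\<le>3*d. \<Sum>j\<le>3*d. \<Sum>k\<le>3*d.
           c i j k * of_nat (i choose a) * of_nat (j choose b) * of_nat (k choose e)
           * p1 ^ (i - a) * p2 ^ (j - b) * p3 ^ (k - e)) = 0)"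
| "mult_ge d c m (Exc (a, b)) \<longleftrightarrow>
     (if a \<noteq> 0 then
        (\<forall>s t. s + t < m \<longrightarrow>
          (\<Sum>i\<le>3*d. \<Sum>j\<le>3*d. \<Sum>k\<le>3*d.
             if i + j = s + d then c i j k * of_nat (j choose t) * (b / a) ^ (j - t) else 0) = 0)
      else
        (\<forall>s t. s + t < m \<longrightarrow>
          (\<Sum>i\<le>3*d. \<Sum>j\<le>3*d. \<Sum>k\<le>3*d.
             if i + j = s + d then c i j k * of_nat (i choose t) * (a / b) ^ (i - t) else 0) = 0))"

definition alpha :: "s1pt set \<Rightarrow> nat \<Rightarrow> nat" where
  "alpha Z m = (LEAST d. \<exists>c. sect d c \<and> (\<exists>i j k. c i j k \<noteq> 0) \<and> (\<forall>q\<in>Z. mult_ge d c m q))"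

end

theory Submission
  imports Defs "HOL-Computational_Algebra.Polynomial"
begin

text \<open>Let d = \<alpha>((m + 4)Z) and let F be a form of degree 3d with multiplicity d at P1 whose
  divisor on S1 has multiplicity at least m + 4 along Z.  We produce a nonzero section of
  (d - 1)L1 with multiplicity at least m along Z, so that \<alpha>(mZ) < \<alpha>((m + 4)Z).

  If F involves z, a third partial derivative of F does it: every derivative lowers the
  multiplicities along Z by one, and derivatives in z keep the multiplicity at P1.  If F has
  degree at most one in z, two derivatives in x or y followed by one in z give a binary form.

  If F = x^(3d) g(y/x) is binary, its divisor consists of lines through P1 and 2d E1, so the
  conditions along Z prescribe orders of vanishing of g at the slopes of the points of Z.
  Comparing degrees, a product of linear factors of degree at most 3(d - 1) satisfies the
  conditions for multiplicity m, unless Z consists of points of E1 of a single slope, i.e. of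
  a single point.\<close>

section \<open>Forms and their partial derivatives\<close>

type_synonym form = "nat \<Rightarrow> nat \<Rightarrow> nat \<Rightarrow> complex"

definition homogeneous :: "nat \<Rightarrow> form \<Rightarrow> bool" where
  "homogeneous n c \<longleftrightarrow> (\<forall>i j k. c i j k \<noteq> 0 \<longrightarrow> i + j + k = n)"

definition exponents_le :: "nat \<Rightarrow> form \<Rightarrow> bool" where
  "exponents_le N c \<longleftrightarrow> (\<forall>i j k. c i j k \<noteq> 0 \<longrightarrow> i \<le> N \<and> j \<le> N \<and> k \<le> N)"

definition ord_P1_ge :: "nat \<Rightarrow> form \<Rightarrow> bool" where
  "ord_P1_ge u c \<longleftrightarrow> (\<forall>i j k. c i j k \<noteq> 0 \<longrightarrow> u \<le> i + j)"

definition z_degree_le :: "nat \<Rightarrow> form \<Rightarrow> bool" where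
  "z_degree_le r c \<longleftrightarrow> (\<forall>i j k. c i j k \<noteq> 0 \<longrightarrow> k \<le> r)"

definition deriv_x :: "form \<Rightarrow> form" where
  "deriv_x c i j k = of_nat (Suc i) * c (Suc i) j k"

definition deriv_y :: "form \<Rightarrow> form" where
  "deriv_y c i j k = of_nat (Suc j) * c i (Suc j) k"

definition deriv_z :: "form \<Rightarrow> form" where
  "deriv_z c i j k = of_nat (Suc k) * c i j (Suc k)"

definition swap_xy :: "form \<Rightarrow> form" where
  "swap_xy c i j k = c j i k"

lemma sect_iff_homogeneous: "sect d c \<longleftrightarrow> homogeneous (3 * d) c \<and> ord_P1_ge d c"
  unfolding sect_def homogeneous_def ord_P1_ge_def by blast

lemma exponents_le_if_homogeneous: "homogeneous n c \<Longrightarrow> n \<le> N \<Longrightarrow> exponents_le N c"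
  unfolding homogeneous_def exponents_le_def by fastforce

lemma exponents_le_SucD:
  assumes "exponents_le N c"
  shows "c (Suc N) j k = 0" "c i (Suc N) k = 0" "c i j (Suc N) = 0"
  using assms unfolding exponents_le_def by (meson Suc_n_not_le_n)+

lemma ord_P1_ge_mono: "ord_P1_ge u c \<Longrightarrow> u' \<le> u \<Longrightarrow> ord_P1_ge u' c"
  unfolding ord_P1_ge_def by force

lemma ord_P1_ge_if_z_degree_0: "homogeneous n c \<Longrightarrow> z_degree_le 0 c \<Longrightarrow> ord_P1_ge n c"
  unfolding homogeneous_def z_degree_le_def ord_P1_ge_def by force

lemma
  shows homogeneous_deriv_x: "homogeneous n c \<Longrightarrow> homogeneous (n - 1) (deriv_x c)"
    and exponents_le_deriv_x: "exponents_le N c \<Longrightarrow> exponents_le N (deriv_x c)"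
    and ord_P1_ge_deriv_x: "ord_P1_ge u c \<Longrightarrow> ord_P1_ge (u - 1) (deriv_x c)"
    and z_degree_le_deriv_x: "z_degree_le r c \<Longrightarrow> z_degree_le r (deriv_x c)"
  unfolding homogeneous_def exponents_le_def ord_P1_ge_def z_degree_le_def deriv_x_def
  by fastforce+

lemma
  shows homogeneous_deriv_y: "homogeneous n c \<Longrightarrow> homogeneous (n - 1) (deriv_y c)"
    and exponents_le_deriv_y: "exponents_le N c \<Longrightarrow> exponents_le N (deriv_y c)"
    and ord_P1_ge_deriv_y: "ord_P1_ge u c \<Longrightarrow> ord_P1_ge (u - 1) (deriv_y c)"
    and z_degree_le_deriv_y: "z_degree_le r c \<Longrightarrow> z_degree_le r (deriv_y c)"
  unfolding homogeneous_def exponents_le_def ord_P1_ge_def z_degree_le_def deriv_y_def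
  by fastforce+

lemma
  shows homogeneous_deriv_z: "homogeneous n c \<Longrightarrow> homogeneous (n - 1) (deriv_z c)"
    and exponents_le_deriv_z: "exponents_le N c \<Longrightarrow> exponents_le N (deriv_z c)"
    and ord_P1_ge_deriv_z: "ord_P1_ge u c \<Longrightarrow> ord_P1_ge u (deriv_z c)"
    and z_degree_le_deriv_z: "z_degree_le r c \<Longrightarrow> z_degree_le (r - 1) (deriv_z c)"
  unfolding homogeneous_def exponents_le_def ord_P1_ge_def z_degree_le_def deriv_z_def
  by fastforce+

lemma
  shows homogeneous_swap_xy: "homogeneous n c \<Longrightarrow> homogeneous n (swap_xy c)"
    and exponents_le_swap_xy: "exponents_le N c \<Longrightarrow> exponents_le N (swap_xy c)"
    and ord_P1_ge_swap_xy: "ord_P1_ge u c \<Longrightarrow> ord_P1_ge u (swap_xy c)"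
  unfolding homogeneous_def exponents_le_def ord_P1_ge_def swap_xy_def
  by fastforce+

lemma swap_xy_deriv_x: "swap_xy (deriv_x c) = deriv_y (swap_xy c)"
  and swap_xy_deriv_y: "swap_xy (deriv_y c) = deriv_x (swap_xy c)"
  and swap_xy_deriv_z: "swap_xy (deriv_z c) = deriv_z (swap_xy c)"
  and swap_xy_swap_xy: "swap_xy (swap_xy c) = c"
  unfolding swap_xy_def deriv_x_def deriv_y_def deriv_z_def by (intro ext; simp)+

lemma deriv_x_nonzero: "c (Suc i) j k \<noteq> 0 \<Longrightarrow> deriv_x c i j k \<noteq> 0"
  and deriv_y_nonzero: "c i (Suc j) k \<noteq> 0 \<Longrightarrow> deriv_y c i j k \<noteq> 0"
  and deriv_z_nonzero: "c i j (Suc k) \<noteq> 0 \<Longrightarrow> deriv_z c i j k \<noteq> 0"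
  unfolding deriv_x_def deriv_y_def deriv_z_def by (simp_all del: of_nat_Suc)

lemma binomial_Suc_mult_power:
  fixes v :: complex
  shows "of_nat (Suc t) * v * of_nat (j choose Suc t) * v ^ (j - Suc t)
       = (of_nat j - of_nat t) * of_nat (j choose t) * v ^ (j - t)"
proof (cases "t < j")
  case True
  have "(j choose Suc t) * Suc t = (j - t) * (j choose t)"
    using True Suc_times_binomial_eq[of "j - 1" t] binomial_absorb_comp[of j t] by (cases j) simp_all
  then have "of_nat (Suc t) * of_nat (j choose Suc t) = (of_nat j - of_nat t) * (of_nat (j choose t) :: complex)"
    using True by (metis mult.commute of_nat_diff of_nat_mult less_imp_le)
  moreover have "v * v ^ (j - Suc t) = v ^ (j - t)"
    using True by (metis Suc_diff_Suc power_Suc)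
  ultimately show ?thesis by (metis (no_types, lifting) mult.assoc mult.left_commute)
next
  case False
  then show ?thesis by (cases "t = j") (auto simp: binomial_eq_0)
qed

lemma sum_atMost_Suc_shift_vanishing:
  fixes G :: "nat \<Rightarrow> 'a::comm_monoid_add"
  assumes "G 0 = 0" "G (Suc N) = 0"
  shows "(\<Sum>i\<le>N. G (Suc i)) = (\<Sum>i\<le>N. G i)"
  using sum.atMost_Suc_shift[of G N] assms by simp

text \<open>In one variable: the a-th Taylor coefficient of the derivative is a + 1 times the
  (a + 1)-st Taylor coefficient.\<close>
lemma sum_deriv_binomial:
  fixes h :: "nat \<Rightarrow> complex"
  assumes "h (Suc N) = 0"
  shows "(\<Sum>i\<le>N. of_nat (Suc i) * h (Suc i) * of_nat (i choose a) * x ^ (i - a))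
       = of_nat (Suc a) * (\<Sum>i\<le>N. h i * of_nat (i choose Suc a) * x ^ (i - Suc a))"
proof -
  have "of_nat (Suc i) * of_nat (i choose a) = (of_nat (Suc a) * of_nat (Suc i choose Suc a) :: complex)" for i
    using Suc_times_binomial_eq[of i a] by (metis mult.commute of_nat_mult)
  then have "(\<Sum>i\<le>N. of_nat (Suc i) * h (Suc i) * of_nat (i choose a) * x ^ (i - a))
      = (\<Sum>i\<le>N. (\<lambda>i. of_nat (Suc a) * (h i * of_nat (i choose Suc a) * x ^ (i - Suc a))) (Suc i))"
    by (intro sum.cong refl) (metis (no_types, lifting) diff_Suc_Suc mult.assoc mult.left_commute)
  also have "\<dots> = (\<Sum>i\<le>N. of_nat (Suc a) * (h i * of_nat (i choose Suc a) * x ^ (i - Suc a)))"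
    by (rule sum_atMost_Suc_shift_vanishing) (use assms in simp_all)
  finally show ?thesis by (simp add: sum_distrib_left)
qed

section \<open>Multiplicities on the blow-up\<close>

definition taylor_coeff ::
    "nat \<Rightarrow> form \<Rightarrow> nat \<Rightarrow> nat \<Rightarrow> nat \<Rightarrow> complex \<times> complex \<times> complex \<Rightarrow> complex" where
  "taylor_coeff N c a b e p = (case p of (p1, p2, p3) \<Rightarrow>
     (\<Sum>i\<le>N. \<Sum>j\<le>N. \<Sum>k\<le>N.
        c i j k * of_nat (i choose a) * of_nat (j choose b) * of_nat (k choose e)
        * p1 ^ (i - a) * p2 ^ (j - b) * p3 ^ (k - e)))"

definition base_order_ge :: "nat \<Rightarrow> form \<Rightarrow> nat \<Rightarrow> complex \<times> complex \<times> complex \<Rightarrow> bool" where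
  "base_order_ge N c M p \<longleftrightarrow> (\<forall>a b e. a + b + e < M \<longrightarrow> taylor_coeff N c a b e p = 0)"

lemma taylor_coeff_deriv_x:
  assumes "exponents_le N c"
  shows "taylor_coeff N (deriv_x c) a b e p = of_nat (Suc a) * taylor_coeff N c (Suc a) b e p"
proof -
  obtain x y z where p: "p = (x, y, z)" by (cases p)
  define h where "h i = (\<Sum>j\<le>N. \<Sum>k\<le>N. c i j k * of_nat (j choose b) * of_nat (k choose e)
                          * y ^ (j - b) * z ^ (k - e))" for i
  have "taylor_coeff N (deriv_x c) a b e p
      = (\<Sum>i\<le>N. of_nat (Suc i) * h (Suc i) * of_nat (i choose a) * x ^ (i - a))"
    unfolding p taylor_coeff_def h_def deriv_x_def
    by (simp add: sum_distrib_left sum_distrib_right ac_simps)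
  also have "\<dots> = of_nat (Suc a) * (\<Sum>i\<le>N. h i * of_nat (i choose Suc a) * x ^ (i - Suc a))"
    by (rule sum_deriv_binomial) (use assms in \<open>simp add: h_def exponents_le_SucD\<close>)
  also have "\<dots> = of_nat (Suc a) * taylor_coeff N c (Suc a) b e p"
    unfolding p taylor_coeff_def h_def by (simp add: sum_distrib_left sum_distrib_right ac_simps)
  finally show ?thesis .
qed

lemma taylor_coeff_swap_xy:
  "taylor_coeff N (swap_xy c) a b e (x, y, z) = taylor_coeff N c b a e (y, x, z)"
  unfolding taylor_coeff_def swap_xy_def by (subst sum.swap) (simp add: ac_simps)

lemma taylor_coeff_deriv_y:
  assumes "exponents_le N c"
  shows "taylor_coeff N (deriv_y c) a b e p = of_nat (Suc b) * taylor_coeff N c a (Suc b) e p"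
proof -
  obtain x y z where p: "p = (x, y, z)" by (cases p)
  have "deriv_y c = swap_xy (deriv_x (swap_xy c))"
    by (simp add: swap_xy_deriv_x swap_xy_swap_xy)
  then show ?thesis
    using taylor_coeff_deriv_x[OF exponents_le_swap_xy[OF assms], of b a e "(y, x, z)"]
    by (simp add: p taylor_coeff_swap_xy)
qed

lemma taylor_coeff_deriv_z:
  assumes "exponents_le N c"
  shows "taylor_coeff N (deriv_z c) a b e p = of_nat (Suc e) * taylor_coeff N c a b (Suc e) p"
proof -
  obtain x y z where p: "p = (x, y, z)" by (cases p)
  define w where "w i j = of_nat (i choose a) * of_nat (j choose b) * x ^ (i - a) * y ^ (j - b)" for i j
  have "taylor_coeff N (deriv_z c) a b e p = (\<Sum>i\<le>N. \<Sum>j\<le>N. w i j *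
          (\<Sum>k\<le>N. of_nat (Suc k) * c i j (Suc k) * of_nat (k choose e) * z ^ (k - e)))"
    unfolding p taylor_coeff_def deriv_z_def w_def
    by (simp add: sum_distrib_left sum_distrib_right ac_simps)
  also have "\<dots> = (\<Sum>i\<le>N. \<Sum>j\<le>N. w i j *
          (of_nat (Suc e) * (\<Sum>k\<le>N. c i j k * of_nat (k choose Suc e) * z ^ (k - Suc e))))"
    by (intro sum.cong refl arg_cong2[where f="(*)"] sum_deriv_binomial)
      (use assms in \<open>simp add: exponents_le_SucD\<close>)
  also have "\<dots> = of_nat (Suc e) * taylor_coeff N c a b (Suc e) p"
    unfolding p taylor_coeff_def w_def by (simp add: sum_distrib_left sum_distrib_right ac_simps)
  finally show ?thesis .
qed

lemma triple_sum_atMost_cut: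
  fixes f :: "nat \<Rightarrow> nat \<Rightarrow> nat \<Rightarrow> complex"
  assumes "N0 \<le> N" "\<And>i j k. f i j k \<noteq> 0 \<Longrightarrow> i \<le> N0 \<and> j \<le> N0 \<and> k \<le> N0"
  shows "(\<Sum>i\<le>N. \<Sum>j\<le>N. \<Sum>k\<le>N. f i j k) = (\<Sum>i\<le>N0. \<Sum>j\<le>N0. \<Sum>k\<le>N0. f i j k)"
proof -
  have cut: "(\<Sum>i\<le>N. g i) = (\<Sum>i\<le>N0. g i)" if "\<And>i. N0 < i \<Longrightarrow> g i = 0"
    for g :: "nat \<Rightarrow> complex"
    by (rule sum.mono_neutral_right) (use assms(1) that in auto)
  have "(\<Sum>k\<le>N. f i j k) = (\<Sum>k\<le>N0. f i j k)" for i j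
    by (rule cut) (use assms(2) in force)
  moreover have "(\<Sum>j\<le>N. \<Sum>k\<le>N0. f i j k) = (\<Sum>j\<le>N0. \<Sum>k\<le>N0. f i j k)" for i
    by (rule cut) (use assms(2) in \<open>force intro!: sum.neutral\<close>)
  moreover have "(\<Sum>i\<le>N. \<Sum>j\<le>N0. \<Sum>k\<le>N0. f i j k) = (\<Sum>i\<le>N0. \<Sum>j\<le>N0. \<Sum>k\<le>N0. f i j k)"
    by (rule cut) (use assms(2) in \<open>force intro!: sum.neutral\<close>)
  ultimately show ?thesis by simp
qed

lemma taylor_coeff_cut:
  "exponents_le N0 c \<Longrightarrow> N0 \<le> N \<Longrightarrow> taylor_coeff N c a b e p = taylor_coeff N0 c a b e p"
  unfolding taylor_coeff_def
  by (cases p) (auto intro!: triple_sum_atMost_cut simp: exponents_le_def)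

lemma base_order_ge_deriv_x:
  "exponents_le N c \<Longrightarrow> base_order_ge N c (Suc M) p \<Longrightarrow> base_order_ge N (deriv_x c) M p"
  and base_order_ge_deriv_y:
  "exponents_le N c \<Longrightarrow> base_order_ge N c (Suc M) p \<Longrightarrow> base_order_ge N (deriv_y c) M p"
  and base_order_ge_deriv_z:
  "exponents_le N c \<Longrightarrow> base_order_ge N c (Suc M) p \<Longrightarrow> base_order_ge N (deriv_z c) M p"
  unfolding base_order_ge_def
  by (auto simp: taylor_coeff_deriv_x taylor_coeff_deriv_y taylor_coeff_deriv_z)

lemma base_order_ge_mono: "base_order_ge N c M p \<Longrightarrow> M' \<le> M \<Longrightarrow> base_order_ge N c M' p"
  unfolding base_order_ge_def by auto

definition dehom :: "nat \<Rightarrow> form \<Rightarrow> nat \<Rightarrow> nat \<Rightarrow> complex" where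
  "dehom N c i j = (\<Sum>k\<le>N. c i j k)"

text \<open>In the chart (u, w) \<mapsto> (u, u w, 1) of the blow-up the polynomial with coefficients
  \<kappa> pulls back to \<Sum> \<kappa> i j u^(i+j) w^j; after division by u^\<tau>, chart_coeff N \<kappa> \<tau> s t v
  is its coefficient of u^s (w - v)^t.\<close>
definition chart_coeff :: "nat \<Rightarrow> (nat \<Rightarrow> nat \<Rightarrow> complex) \<Rightarrow> int \<Rightarrow> nat \<Rightarrow> nat \<Rightarrow> complex \<Rightarrow> complex" where
  "chart_coeff N \<kappa> \<tau> s t v =
     (\<Sum>i\<le>N. \<Sum>j\<le>N. if int (i + j) = int s + \<tau> then \<kappa> i j * of_nat (j choose t) * v ^ (j - t) else 0)"

definition chart_order_ge :: "nat \<Rightarrow> (nat \<Rightarrow> nat \<Rightarrow> complex) \<Rightarrow> int \<Rightarrow> nat \<Rightarrow> complex \<Rightarrow> bool" where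
  "chart_order_ge N \<kappa> \<tau> M v \<longleftrightarrow> (\<forall>s t. s + t < M \<longrightarrow> chart_coeff N \<kappa> \<tau> s t v = 0)"

text \<open>In the chart, x \<partial>/\<partial>x = u \<partial>/\<partial>u - w \<partial>/\<partial>w and \<partial>/\<partial>y = u^-1 \<partial>/\<partial>w.\<close>
lemma chart_coeff_deriv_x:
  assumes "\<And>j. \<kappa> (Suc N) j = 0"
  shows "chart_coeff N (\<lambda>i j. of_nat (Suc i) * \<kappa> (Suc i) j) (\<tau> - 1) s t v
     = (of_int (int s + \<tau>) - of_nat t) * chart_coeff N \<kappa> \<tau> s t v
       - of_nat (Suc t) * v * chart_coeff N \<kappa> \<tau> s (Suc t) v"
proof -
  define G where "G i = (\<Sum>j\<le>N. if int (i + j) = int s + \<tau>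
                          then of_nat i * \<kappa> i j * of_nat (j choose t) * v ^ (j - t) else 0)" for i
  have summand: "of_nat i * \<kappa> i j * of_nat (j choose t) * v ^ (j - t)
      = (of_int (int s + \<tau>) - of_nat t) * (\<kappa> i j * of_nat (j choose t) * v ^ (j - t))
        - of_nat (Suc t) * v * (\<kappa> i j * of_nat (j choose Suc t) * v ^ (j - Suc t))"
    if "int (i + j) = int s + \<tau>" for i j
  proof -
    have i: "(of_nat i :: complex) = of_int (int s + \<tau>) - of_nat j"
      using arg_cong[OF that, of "of_int :: int \<Rightarrow> complex"] by (simp add: eq_diff_eq)
    have "of_nat (Suc t) * v * (\<kappa> i j * of_nat (j choose Suc t) * v ^ (j - Suc t))
        = \<kappa> i j * ((of_nat j - of_nat t) * of_nat (j choose t) * v ^ (j - t))"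
      using binomial_Suc_mult_power[of t v j] by (metis mult.assoc mult.left_commute)
    then show ?thesis unfolding i by (simp add: algebra_simps)
  qed
  have "chart_coeff N (\<lambda>i j. of_nat (Suc i) * \<kappa> (Suc i) j) (\<tau> - 1) s t v = (\<Sum>i\<le>N. G (Suc i))"
    unfolding chart_coeff_def G_def by (intro sum.cong refl) (auto simp: ac_simps)
  also have "\<dots> = (\<Sum>i\<le>N. G i)"
    by (rule sum_atMost_Suc_shift_vanishing) (simp_all add: G_def assms cong: if_cong)
  also have "\<dots> = (of_int (int s + \<tau>) - of_nat t) * chart_coeff N \<kappa> \<tau> s t v
       - of_nat (Suc t) * v * chart_coeff N \<kappa> \<tau> s (Suc t) v"
    unfolding G_def chart_coeff_def sum_distrib_left sum_subtractf[symmetric]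
    by (intro sum.cong refl) (simp add: summand)
  finally show ?thesis .
qed

lemma chart_coeff_deriv_y:
  assumes "\<And>i. \<kappa> i (Suc N) = 0"
  shows "chart_coeff N (\<lambda>i j. of_nat (Suc j) * \<kappa> i (Suc j)) (\<tau> - 1) s t v
       = of_nat (Suc t) * chart_coeff N \<kappa> \<tau> s (Suc t) v"
proof -
  define h where "h i j = (if int (i + j) = int s + \<tau> then \<kappa> i j else 0)" for i j
  have "chart_coeff N (\<lambda>i j. of_nat (Suc j) * \<kappa> i (Suc j)) (\<tau> - 1) s t v
      = (\<Sum>i\<le>N. \<Sum>j\<le>N. of_nat (Suc j) * h i (Suc j) * of_nat (j choose t) * v ^ (j - t))"
    unfolding chart_coeff_def h_def by (intro sum.cong refl) auto
  also have "\<dots> = (\<Sum>i\<le>N. of_nat (Suc t) * (\<Sum>j\<le>N. h i j * of_nat (j choose Suc t) * v ^ (j - Suc t)))"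
    by (intro sum.cong refl sum_deriv_binomial) (simp add: assms h_def)
  also have "\<dots> = of_nat (Suc t) * chart_coeff N \<kappa> \<tau> s (Suc t) v"
    unfolding chart_coeff_def h_def sum_distrib_left by (intro sum.cong refl) auto
  finally show ?thesis .
qed

lemma chart_coeff_scale:
  assumes "\<And>i j. \<kappa>' i j = of_int (int n - int (i + j)) * \<kappa> i j"
  shows "chart_coeff N \<kappa>' \<tau> s t v = of_int (int n - (int s + \<tau>)) * chart_coeff N \<kappa> \<tau> s t v"
  unfolding chart_coeff_def sum_distrib_left by (intro sum.cong refl) (auto simp: assms)

lemma chart_coeff_raise: "chart_coeff N \<kappa> (\<tau> + 1) s t v = chart_coeff N \<kappa> \<tau> (Suc s) t v"
  unfolding chart_coeff_def by (intro sum.cong refl) (auto simp: algebra_simps)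

lemma chart_coeff_lower: "chart_coeff N \<kappa> (\<tau> - 1) (Suc s) t v = chart_coeff N \<kappa> \<tau> s t v"
  unfolding chart_coeff_def by (intro sum.cong refl) (auto simp: algebra_simps)

lemma chart_coeff_lower_0:
  "(\<And>i j. \<kappa> i j \<noteq> 0 \<Longrightarrow> \<tau> \<le> int (i + j)) \<Longrightarrow> chart_coeff N \<kappa> (\<tau> - 1) 0 t v = 0"
  unfolding chart_coeff_def by (intro sum.neutral ballI) force

lemma chart_order_ge_deriv_x:
  assumes "\<And>j. \<kappa> (Suc N) j = 0" "chart_order_ge N \<kappa> \<tau> (Suc M) v"
  shows "chart_order_ge N (\<lambda>i j. of_nat (Suc i) * \<kappa> (Suc i) j) (\<tau> - 1) M v"
  using assms(2) unfolding chart_order_ge_def chart_coeff_deriv_x[of \<kappa>, OF assms(1)] by simp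

lemma chart_order_ge_deriv_y:
  assumes "\<And>i. \<kappa> i (Suc N) = 0" "chart_order_ge N \<kappa> \<tau> (Suc M) v"
  shows "chart_order_ge N (\<lambda>i j. of_nat (Suc j) * \<kappa> i (Suc j)) (\<tau> - 1) M v"
  using assms(2) unfolding chart_order_ge_def chart_coeff_deriv_y[of \<kappa>, OF assms(1)] by simp

lemma chart_order_ge_scale:
  "(\<And>i j. \<kappa>' i j = of_int (int n - int (i + j)) * \<kappa> i j) \<Longrightarrow> chart_order_ge N \<kappa> \<tau> M v
    \<Longrightarrow> chart_order_ge N \<kappa>' \<tau> M v"
  unfolding chart_order_ge_def by (simp add: chart_coeff_scale)

lemma chart_order_ge_raise: "chart_order_ge N \<kappa> \<tau> (Suc M) v \<Longrightarrow> chart_order_ge N \<kappa> (\<tau> + 1) M v"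
  unfolding chart_order_ge_def by (simp add: chart_coeff_raise)

lemma chart_order_ge_lower:
  assumes "\<And>i j. \<kappa> i j \<noteq> 0 \<Longrightarrow> \<tau> \<le> int (i + j)" and "chart_order_ge N \<kappa> \<tau> M v"
  shows "chart_order_ge N \<kappa> (\<tau> - 1) M v"
  unfolding chart_order_ge_def
proof (intro allI impI)
  fix s t assume "s + t < M"
  then show "chart_coeff N \<kappa> (\<tau> - 1) s t v = 0"
    using assms by (cases s) (simp_all add: chart_coeff_lower_0 chart_coeff_lower chart_order_ge_def)
qed

lemma chart_order_ge_mono: "chart_order_ge N \<kappa> \<tau> M v \<Longrightarrow> M' \<le> M \<Longrightarrow> chart_order_ge N \<kappa> \<tau> M' v"
  unfolding chart_order_ge_def by auto

lemma dehom_deriv_x: "dehom N (deriv_x c) = (\<lambda>i j. of_nat (Suc i) * dehom N c (Suc i) j)"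
  and dehom_deriv_y: "dehom N (deriv_y c) = (\<lambda>i j. of_nat (Suc j) * dehom N c i (Suc j))"
  unfolding dehom_def deriv_x_def deriv_y_def by (simp_all add: sum_distrib_left)

lemma dehom_swap_xy: "dehom N (swap_xy c) i j = dehom N c j i"
  unfolding dehom_def swap_xy_def by simp

lemma dehom_exponents_le:
  "exponents_le N c \<Longrightarrow> dehom N c (Suc N) j = 0"
  "exponents_le N c \<Longrightarrow> dehom N c i (Suc N) = 0"
  unfolding dehom_def by (simp_all add: exponents_le_SucD)

lemma dehom_ord_P1_ge: "ord_P1_ge u c \<Longrightarrow> dehom N c i j \<noteq> 0 \<Longrightarrow> u \<le> i + j"
  unfolding dehom_def ord_P1_ge_def by (meson sum.neutral)

text \<open>Euler's identity z F_z = n F - x F_x - y F_y, read off at z = 1.\<close>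
lemma dehom_deriv_z:
  assumes "homogeneous n c" "exponents_le N c"
  shows "dehom N (deriv_z c) i j = of_int (int n - int (i + j)) * dehom N c i j"
proof -
  have "dehom N (deriv_z c) i j = (\<Sum>k\<le>N. (\<lambda>k. of_nat k * c i j k) (Suc k))"
    unfolding dehom_def deriv_z_def by simp
  also have "\<dots> = (\<Sum>k\<le>N. of_nat k * c i j k)"
    by (rule sum_atMost_Suc_shift_vanishing) (use assms(2) in \<open>simp_all add: exponents_le_SucD\<close>)
  also have "\<dots> = (\<Sum>k\<le>N. of_int (int n - int (i + j)) * c i j k)"
  proof (intro sum.cong refl)
    fix k
    have "c i j k \<noteq> 0 \<Longrightarrow> k = n - (i + j) \<and> i + j \<le> n"
      using assms(1) unfolding homogeneous_def by fastforce
    then show "of_nat k * c i j k = of_int (int n - int (i + j)) * c i j k"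
      by (cases "c i j k = 0") (auto simp: of_nat_diff)
  qed
  finally show ?thesis unfolding dehom_def by (simp add: sum_distrib_left)
qed

text \<open>order_ge N c \<tau> M q: the divisor f^*F - \<tau> E1 has multiplicity at least M at q, where F is
  the form with coefficients c, all exponents at most N.  The chart (u, w) \<mapsto> (u w, u, 1) is
  reduced to the first one by exchanging x and y.\<close>
fun order_ge :: "nat \<Rightarrow> form \<Rightarrow> int \<Rightarrow> nat \<Rightarrow> s1pt \<Rightarrow> bool" where
  "order_ge N c \<tau> M (Base p) \<longleftrightarrow> base_order_ge N c M p"
| "order_ge N c \<tau> M (Exc (a, b)) \<longleftrightarrow>
     (if a \<noteq> 0 then chart_order_ge N (dehom N c) \<tau> M (b / a)
      else chart_order_ge N (dehom N (swap_xy c)) \<tau> M (a / b))"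

lemma order_ge_deriv_x:
  assumes "exponents_le N c" "order_ge N c \<tau> (Suc M) q"
  shows "order_ge N (deriv_x c) (\<tau> - 1) M q"
proof (cases q)
  case (Base p)
  then show ?thesis using assms by (simp add: base_order_ge_deriv_x)
next
  case (Exc ab)
  obtain a b where q: "q = Exc (a, b)" using Exc by (cases ab) simp
  show ?thesis
  proof (cases "a = 0")
    case True
    have "chart_order_ge N (dehom N (deriv_y (swap_xy c))) (\<tau> - 1) M (a / b)"
      unfolding dehom_deriv_y
      by (rule chart_order_ge_deriv_y)
        (use assms True q in \<open>simp_all add: dehom_exponents_le exponents_le_swap_xy\<close>)
    then show ?thesis by (simp add: q True swap_xy_deriv_x)
  next
    case False
    have "chart_order_ge N (dehom N (deriv_x c)) (\<tau> - 1) M (b / a)"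
      unfolding dehom_deriv_x
      by (rule chart_order_ge_deriv_x) (use assms False q in \<open>simp_all add: dehom_exponents_le\<close>)
    then show ?thesis by (simp add: q False)
  qed
qed

lemma order_ge_deriv_y:
  assumes "exponents_le N c" "order_ge N c \<tau> (Suc M) q"
  shows "order_ge N (deriv_y c) (\<tau> - 1) M q"
proof (cases q)
  case (Base p)
  then show ?thesis using assms by (simp add: base_order_ge_deriv_y)
next
  case (Exc ab)
  obtain a b where q: "q = Exc (a, b)" using Exc by (cases ab) simp
  show ?thesis
  proof (cases "a = 0")
    case True
    have "chart_order_ge N (dehom N (deriv_x (swap_xy c))) (\<tau> - 1) M (a / b)"
      unfolding dehom_deriv_x
      by (rule chart_order_ge_deriv_x)
        (use assms True q in \<open>simp_all add: dehom_exponents_le exponents_le_swap_xy\<close>)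
    then show ?thesis by (simp add: q True swap_xy_deriv_y)
  next
    case False
    have "chart_order_ge N (dehom N (deriv_y c)) (\<tau> - 1) M (b / a)"
      unfolding dehom_deriv_y
      by (rule chart_order_ge_deriv_y) (use assms False q in \<open>simp_all add: dehom_exponents_le\<close>)
    then show ?thesis by (simp add: q False)
  qed
qed

lemma order_ge_deriv_z:
  assumes "homogeneous n c" "exponents_le N c" "order_ge N c \<tau> (Suc M) q"
  shows "order_ge N (deriv_z c) \<tau> M q"
proof (cases q)
  case (Base p)
  then show ?thesis using assms by (simp add: base_order_ge_deriv_z)
next
  case (Exc ab)
  obtain a b where q: "q = Exc (a, b)" using Exc by (cases ab) simp
  have scale: "chart_order_ge N (dehom N (deriv_z c')) \<tau> M v"
    if "homogeneous n c'" "exponents_le N c'" "chart_order_ge N (dehom N c') \<tau> (Suc M) v" for c' v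
    using chart_order_ge_scale[OF dehom_deriv_z[OF that(1,2)] chart_order_ge_mono[OF that(3)]]
    by simp
  show ?thesis
  proof (cases "a = 0")
    case True
    then show ?thesis
      using assms scale[of "swap_xy c"]
      by (simp add: q swap_xy_deriv_z homogeneous_swap_xy exponents_le_swap_xy)
  next
    case False
    then show ?thesis using assms scale[of c] by (simp add: q)
  qed
qed

lemma order_ge_raise: "order_ge N c \<tau> (Suc M) q \<Longrightarrow> order_ge N c (\<tau> + 1) M q"
  by (cases "(N, c, \<tau>, M, q)" rule: order_ge.cases)
    (auto simp: chart_order_ge_raise intro: base_order_ge_mono)

lemma order_ge_lower:
  assumes "ord_P1_ge u c" "\<tau> \<le> int u" "order_ge N c \<tau> M q"
  shows "order_ge N c (\<tau> - 1) M q"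
proof -
  have "\<tau> \<le> int (i + j)" if "dehom N c' i j \<noteq> 0" "ord_P1_ge u c'" for c' i j
    using dehom_ord_P1_ge[OF that(2,1)] assms(2) by linarith
  then show ?thesis
    using assms ord_P1_ge_swap_xy[OF assms(1)]
    by (cases "(N, c, \<tau>, M, q)" rule: order_ge.cases) (auto intro: chart_order_ge_lower)
qed

lemma order_ge_mono: "order_ge N c \<tau> M q \<Longrightarrow> M' \<le> M \<Longrightarrow> order_ge N c \<tau> M' q"
  by (cases "(N, c, \<tau>, M, q)" rule: order_ge.cases) (auto intro: base_order_ge_mono chart_order_ge_mono)

lemma chart_coeff_dehom:
  "chart_coeff N (dehom N c) \<tau> s t v = (\<Sum>i\<le>N. \<Sum>j\<le>N. \<Sum>k\<le>N.
     if int (i + j) = int s + \<tau> then c i j k * of_nat (j choose t) * v ^ (j - t) else 0)"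
  unfolding chart_coeff_def dehom_def by (intro sum.cong refl) (simp add: sum_distrib_right)

lemma chart_coeff_dehom_swap_xy:
  "chart_coeff N (dehom N (swap_xy c)) \<tau> s t v = (\<Sum>i\<le>N. \<Sum>j\<le>N. \<Sum>k\<le>N.
     if int (i + j) = int s + \<tau> then c i j k * of_nat (i choose t) * v ^ (i - t) else 0)"
  unfolding chart_coeff_dehom swap_xy_def by (subst sum.swap) (simp add: add.commute)

lemma mult_ge_iff_order_ge:
  assumes "homogeneous (3 * D) c" "3 * D \<le> N"
  shows "mult_ge D c M q \<longleftrightarrow> order_ge N c (int D) M q"
proof -
  have bounded: "exponents_le (3 * D) c"
    using assms(1) by (rule exponents_le_if_homogeneous) simp
  have int_eq: "int (i + j) = int s + int D \<longleftrightarrow> i + j = s + D" for i j s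
    by linarith
  have chart1: "chart_coeff N (dehom N c) (int D) s t v = (\<Sum>i\<le>3*D. \<Sum>j\<le>3*D. \<Sum>k\<le>3*D.
      if i + j = s + D then c i j k * of_nat (j choose t) * v ^ (j - t) else 0)" for s t v
    unfolding chart_coeff_dehom int_eq
    by (rule triple_sum_atMost_cut[OF assms(2)]) (use bounded in \<open>auto simp: exponents_le_def split: if_splits\<close>)
  have chart2: "chart_coeff N (dehom N (swap_xy c)) (int D) s t v = (\<Sum>i\<le>3*D. \<Sum>j\<le>3*D. \<Sum>k\<le>3*D.
      if i + j = s + D then c i j k * of_nat (i choose t) * v ^ (i - t) else 0)" for s t v
    unfolding chart_coeff_dehom_swap_xy int_eq
    by (rule triple_sum_atMost_cut[OF assms(2)]) (use bounded in \<open>auto simp: exponents_le_def split: if_splits\<close>)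
  show ?thesis
  proof (cases q)
    case (Base p)
    then show ?thesis
      by (cases p) (simp add: Base base_order_ge_def taylor_coeff_cut[OF bounded assms(2)],
          simp add: taylor_coeff_def)
  next
    case (Exc ab)
    then show ?thesis
      by (cases ab) (simp only: mult_ge.simps order_ge.simps chart_order_ge_def chart1 chart2)
  qed
qed

section \<open>Sections obtained by differentiation\<close>

datatype direction = Dx | Dy | Dz

fun deriv :: "direction \<Rightarrow> form \<Rightarrow> form" where
  "deriv Dx = deriv_x"
| "deriv Dy = deriv_y"
| "deriv Dz = deriv_z"

definition derivs :: "direction list \<Rightarrow> form \<Rightarrow> form" where
  "derivs ds = foldr deriv ds"

lemma derivs_Nil [simp]: "derivs [] c = c"
  and derivs_Cons [simp]: "derivs (d # ds) c = deriv d (derivs ds c)"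
  unfolding derivs_def by simp_all

lemma count_list_replicate: "count_list (replicate n x) y = (if x = y then n else 0)"
  by (induction n) auto

lemma length_eq_count_list_direction:
  "length ds = count_list ds Dx + count_list ds Dy + count_list ds Dz"
proof (induction ds)
  case (Cons d ds)
  then show ?case by (cases d) simp_all
qed simp

lemma homogeneous_derivs: "homogeneous n c \<Longrightarrow> homogeneous (n - length ds) (derivs ds c)"
proof (induction ds)
  case (Cons d ds)
  then have hyp: "homogeneous (n - length ds) (derivs ds c)" by simp
  show ?case
    by (cases d) (use homogeneous_deriv_x[OF hyp] homogeneous_deriv_y[OF hyp]
        homogeneous_deriv_z[OF hyp] in simp_all)
qed simp

lemma exponents_le_derivs: "exponents_le N c \<Longrightarrow> exponents_le N (derivs ds c)"
proof (induction ds)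
  case (Cons d ds)
  then have "exponents_le N (derivs ds c)" by simp
  then show ?case
    by (cases d) (simp_all add: exponents_le_deriv_x exponents_le_deriv_y exponents_le_deriv_z)
qed simp

lemma ord_P1_ge_derivs:
  "ord_P1_ge u c \<Longrightarrow> ord_P1_ge (u - (count_list ds Dx + count_list ds Dy)) (derivs ds c)"
proof (induction ds)
  case (Cons d ds)
  then have hyp: "ord_P1_ge (u - (count_list ds Dx + count_list ds Dy)) (derivs ds c)" by simp
  show ?case
    by (cases d) (use ord_P1_ge_deriv_x[OF hyp] ord_P1_ge_deriv_y[OF hyp]
        ord_P1_ge_deriv_z[OF hyp] in simp_all)
qed simp

lemma z_degree_le_derivs: "z_degree_le r c \<Longrightarrow> z_degree_le (r - count_list ds Dz) (derivs ds c)"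
proof (induction ds)
  case (Cons d ds)
  then have hyp: "z_degree_le (r - count_list ds Dz) (derivs ds c)" by simp
  show ?case
    by (cases d) (use z_degree_le_deriv_x[OF hyp] z_degree_le_deriv_y[OF hyp]
        z_degree_le_deriv_z[OF hyp] in simp_all)
qed simp

lemma derivs_nonzero:
  "c (i + count_list ds Dx) (j + count_list ds Dy) (k + count_list ds Dz) \<noteq> 0
   \<Longrightarrow> derivs ds c i j k \<noteq> 0"
proof (induction ds arbitrary: i j k)
  case (Cons d ds)
  then show ?case
    by (cases d) (auto intro!: deriv_x_nonzero deriv_y_nonzero deriv_z_nonzero)
qed simp

lemma order_ge_derivs:
  assumes "homogeneous n c" "exponents_le N c" "order_ge N c \<tau> (M + length ds) q"
  shows "order_ge N (derivs ds c) (\<tau> - int (count_list ds Dx + count_list ds Dy)) M q"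
  using assms(3)
proof (induction ds arbitrary: M)
  case (Cons d ds)
  let ?c = "derivs ds c" and ?\<tau> = "\<tau> - int (count_list ds Dx + count_list ds Dy)"
  have hom: "homogeneous (n - length ds) ?c" using assms(1) by (rule homogeneous_derivs)
  have bounded: "exponents_le N ?c" using assms(2) by (rule exponents_le_derivs)
  have hyp: "order_ge N ?c ?\<tau> (Suc M) q" using Cons by simp
  show ?case
    by (cases d) (use order_ge_deriv_x[OF bounded hyp] order_ge_deriv_y[OF bounded hyp]
        order_ge_deriv_z[OF hom bounded hyp] in \<open>simp_all add: algebra_simps\<close>)
qed simp

definition has_section :: "s1pt set \<Rightarrow> nat \<Rightarrow> nat \<Rightarrow> bool" where
  "has_section Z M d \<longleftrightarrow> (\<exists>c. sect d c \<and> (\<exists>i j k. c i j k \<noteq> 0) \<and> (\<forall>q\<in>Z. mult_ge d c M q))"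

lemma alpha_eq_Least: "alpha Z M = (LEAST d. has_section Z M d)"
  unfolding alpha_def has_section_def ..

lemma has_section_if_order_ge:
  assumes "homogeneous (3 * e) G" "ord_P1_ge e G" "G i j k \<noteq> 0" "3 * e \<le> N"
    and "\<forall>q\<in>Z. order_ge N G (int e) M q"
  shows "has_section Z M e"
  using assms mult_ge_iff_order_ge[OF assms(1,4)]
  unfolding has_section_def sect_iff_homogeneous by blast

lemma ord_P1_ge_derivs_3:
  assumes F: "sect d F" and ds: "length ds = 3"
    and enough_z: "2 \<le> count_list ds Dz \<or> (count_list ds Dz = 1 \<and> z_degree_le 1 F)"
  shows "ord_P1_ge (d - 1) (derivs ds F)"
proof -
  have hom: "homogeneous (3 * d) F" and P1: "ord_P1_ge d F"
    using F by (simp_all add: sect_iff_homogeneous)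
  have counts: "count_list ds Dx + count_list ds Dy + count_list ds Dz = 3"
    using ds length_eq_count_list_direction[of ds] by simp
  show ?thesis
  proof (cases "2 \<le> count_list ds Dz")
    case True
    then show ?thesis
      using ord_P1_ge_derivs[OF P1, of ds] counts by (auto elim: ord_P1_ge_mono)
  next
    case False
    then have "z_degree_le 0 (derivs ds F)"
      using z_degree_le_derivs[of 1 F ds] enough_z by simp
    moreover have "homogeneous (3 * (d - 1)) (derivs ds F)"
      using homogeneous_derivs[OF hom, of ds] ds by (simp add: diff_mult_distrib2)
    ultimately show ?thesis
      by (intro ord_P1_ge_mono[OF ord_P1_ge_if_z_degree_0]) auto
  qed
qed

text \<open>Every x- or y-derivative lowers the twist by one.  Without such derivatives the twist is
  lowered using the order d at P1; with two of them it is raised at the cost of one order.\<close>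
lemma order_ge_derivs_3:
  assumes d: "1 \<le> d" and F: "sect d F" "mult_ge d F (m + 4) q"
    and ds: "length ds = 3" "1 \<le> count_list ds Dz"
  shows "order_ge (3 * d) (derivs ds F) (int (d - 1)) m q"
proof -
  define r where "r = count_list ds Dx + count_list ds Dy"
  have hom: "homogeneous (3 * d) F" and P1: "ord_P1_ge d F"
    using F(1) by (simp_all add: sect_iff_homogeneous)
  have bounded: "exponents_le (3 * d) F"
    using hom by (rule exponents_le_if_homogeneous) simp
  have "order_ge (3 * d) F (int d) (Suc m + length ds) q"
    using F(2) ds(1) mult_ge_iff_order_ge[OF hom order_refl] by (simp add: add.commute)
  then have ord: "order_ge (3 * d) (derivs ds F) (int d - int r) (Suc m) q"
    unfolding r_def by (rule order_ge_derivs[OF hom bounded])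
  have "r + count_list ds Dz = 3"
    using ds(1) length_eq_count_list_direction[of ds] unfolding r_def by simp
  then consider "r = 0" | "r = 1" | "r = 2" using ds(2) by linarith
  then show ?thesis
  proof cases
    case 1
    then have "ord_P1_ge d (derivs ds F)"
      using ord_P1_ge_derivs[OF P1, of ds] unfolding r_def by simp
    then show ?thesis
      using order_ge_mono[OF order_ge_lower[OF _ _ ord]] 1 d by (simp add: of_nat_diff)
  next
    case 2
    then show ?thesis using order_ge_mono[OF ord] d by (simp add: of_nat_diff)
  next
    case 3
    then show ?thesis using order_ge_raise[OF ord] d by (simp add: of_nat_diff)
  qed
qed

lemma has_section_derivs:
  assumes d: "1 \<le> d" and F: "sect d F" "\<forall>q\<in>Z. mult_ge d F (m + 4) q"
    and ds: "length ds = 3" "derivs ds F i j k \<noteq> 0"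
    and enough_z: "2 \<le> count_list ds Dz \<or> (count_list ds Dz = 1 \<and> z_degree_le 1 F)"
  shows "has_section Z m (d - 1)"
proof (rule has_section_if_order_ge[where G = "derivs ds F" and N = "3 * d"])
  have "homogeneous (3 * d) F" using F(1) by (simp add: sect_iff_homogeneous)
  then show "homogeneous (3 * (d - 1)) (derivs ds F)"
    using homogeneous_derivs[of "3 * d" F ds] ds(1) by (simp add: diff_mult_distrib2)
  show "ord_P1_ge (d - 1) (derivs ds F)" by (rule ord_P1_ge_derivs_3[OF F(1) ds(1) enough_z])
  show "\<forall>q\<in>Z. order_ge (3 * d) (derivs ds F) (int (d - 1)) m q"
    using order_ge_derivs_3[OF d F(1) _ ds(1)] F(2) enough_z by auto
qed (use ds(2) in simp_all)

lemma derivs_witness: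
  assumes "c i j k \<noteq> 0" "e \<le> k" "n \<le> i + j"
  shows "\<exists>ds i' j' k'. length ds = n + e \<and> count_list ds Dz = e \<and> derivs ds c i' j' k' \<noteq> 0"
proof -
  define a where "a = min i n"
  define ds where "ds = replicate a Dx @ replicate (n - a) Dy @ replicate e Dz"
  have "derivs ds c (i - a) (j - (n - a)) (k - e) \<noteq> 0"
    by (rule derivs_nonzero) (use assms in \<open>auto simp: ds_def a_def count_list_replicate\<close>)
  moreover have "length ds = n + e" "count_list ds Dz = e"
    by (simp_all add: ds_def a_def count_list_replicate)
  ultimately show ?thesis by blast
qed

lemma has_section_if_depends_on_z:
  assumes d: "1 \<le> d" and F: "sect d F" "\<forall>q\<in>Z. mult_ge d F (m + 4) q"
    and z: "F i j k \<noteq> 0" "k \<noteq> 0"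
  shows "has_section Z m (d - 1)"
proof -
  have total: "i + j + k = 3 * d" if "F i j k \<noteq> 0" for i j k
    using F(1) that unfolding sect_def by blast
  txt \<open>Use as many derivatives in z as possible, since they keep the order at P1.\<close>
  consider (z3) i' j' k' where "F i' j' k' \<noteq> 0" "3 \<le> k'"
    | (z2) i' j' where "F i' j' 2 \<noteq> 0"
    | (z1) "z_degree_le 1 F"
  proof -
    have "k \<le> 1" if "F i j k \<noteq> 0" "\<forall>i j k. F i j k \<noteq> 0 \<longrightarrow> k < 3" "\<forall>i j. F i j 2 = 0" for i j k
      using that(2)[rule_format, OF that(1)] that(3)[rule_format, of i j] that(1) by (cases "k = 2") auto
    then show thesis using that unfolding z_degree_le_def by (meson not_le)
  qed
  then have "\<exists>ds i' j' k'. length ds = 3 \<and> derivs ds F i' j' k' \<noteq> 0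
               \<and> (2 \<le> count_list ds Dz \<or> (count_list ds Dz = 1 \<and> z_degree_le 1 F))"
  proof cases
    case z3
    then obtain ds i'' j'' k'' where "length ds = 0 + 3" "count_list ds Dz = 3" "derivs ds F i'' j'' k'' \<noteq> 0"
      using derivs_witness[of F i' j' k' 3 0] by blast
    then show ?thesis by (intro exI[of _ ds]) auto
  next
    case z2
    moreover have "1 \<le> i' + j'" using total[OF z2] d by linarith
    ultimately obtain ds i'' j'' k'' where "length ds = 1 + 2" "count_list ds Dz = 2" "derivs ds F i'' j'' k'' \<noteq> 0"
      using derivs_witness[of F i' j' 2 2 1] by blast
    then show ?thesis by (intro exI[of _ ds]) auto
  next
    case z1
    then have k: "k = 1" using z unfolding z_degree_le_def by fastforce
    moreover have "2 \<le> i + j" using total[OF z(1)] k d by linarith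
    ultimately obtain ds i'' j'' k'' where "length ds = 2 + 1" "count_list ds Dz = 1" "derivs ds F i'' j'' k'' \<noteq> 0"
      using derivs_witness[of F i j k 1 2] z by blast
    then show ?thesis using z1 by (intro exI[of _ ds]) auto
  qed
  then show ?thesis using has_section_derivs[OF d F] by blast
qed

section \<open>Binary forms\<close>

definition poly_taylor_coeff :: "complex poly \<Rightarrow> complex \<Rightarrow> nat \<Rightarrow> complex" where
  "poly_taylor_coeff g v t = coeff (pcompose g [:v, 1:]) t"

lemma pcompose_power: "pcompose (p ^ r) q = (pcompose p q) ^ r"
  by (induction r) (simp_all add: pcompose_mult pcompose_1)

lemma poly_taylor_coeff_eq_sum:
  assumes "degree g \<le> n"
  shows "poly_taylor_coeff g v t = (\<Sum>j\<le>n. coeff g j * of_nat (j choose t) * v ^ (j - t))"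
proof -
  have "pcompose g [:v, 1:] = (\<Sum>j\<le>n. smult (coeff g j) ([:v, 1:] ^ j))"
    by (subst poly_as_sum_of_monoms'[OF assms, symmetric])
      (simp add: pcompose_sum monom_altdef pcompose_smult pcompose_power pcompose_pCons)
  then have "poly_taylor_coeff g v t = (\<Sum>j\<le>n. coeff g j * coeff ([:v, 1:] ^ j) t)"
    by (simp add: poly_taylor_coeff_def coeff_sum)
  also have "\<dots> = (\<Sum>j\<le>n. coeff g j * of_nat (j choose t) * v ^ (j - t))"
  proof (intro sum.cong refl)
    fix j
    show "coeff g j * coeff ([:v, 1:] ^ j) t = coeff g j * of_nat (j choose t) * v ^ (j - t)"
    proof (cases "t \<le> j")
      case True
      then show ?thesis by (simp add: coeff_linear_poly_power)
    next
      case False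
      then have "coeff ([:v, 1:] ^ j) t = 0"
        by (intro coeff_eq_0) (simp add: degree_linear_power)
      then show ?thesis using False by (simp add: binomial_eq_0)
    qed
  qed
  finally show ?thesis .
qed

lemma linear_power_dvd_iff_poly_taylor_coeff:
  "[:-v, 1:] ^ r dvd g \<longleftrightarrow> (\<forall>t<r. poly_taylor_coeff g v t = 0)"
proof -
  have shift: "pcompose [:-v, 1:] [:v, 1:] = [:0, 1:]" "pcompose [:v, 1:] [:-v, 1:] = [:0, 1:]"
    "pcompose [:0, 1:] q = q" for q :: "complex poly"
    by (simp_all add: pcompose_pCons)
  have dvd_pcompose: "p dvd p' \<Longrightarrow> pcompose p q dvd pcompose p' q" for p p' q :: "complex poly"
    by (auto simp: pcompose_mult elim!: dvdE)
  have "[:-v, 1:] ^ r dvd g \<longleftrightarrow> monom 1 r dvd pcompose g [:v, 1:]"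
  proof
    assume "[:-v, 1:] ^ r dvd g"
    from dvd_pcompose[OF this, of "[:v, 1:]"] show "monom 1 r dvd pcompose g [:v, 1:]"
      by (simp add: pcompose_power shift monom_altdef)
  next
    assume "monom 1 r dvd pcompose g [:v, 1:]"
    from dvd_pcompose[OF this, of "[:-v, 1:]"] show "[:-v, 1:] ^ r dvd g"
      by (simp add: pcompose_power shift monom_altdef pcompose_assoc[symmetric])
  qed
  then show ?thesis by (simp add: monom_1_dvd_iff' poly_taylor_coeff_def)
qed

text \<open>The binary form x^n g(y/x).\<close>
definition binary_form :: "nat \<Rightarrow> complex poly \<Rightarrow> form" where
  "binary_form n g i j k = (if k = 0 \<and> i + j = n then coeff g j else 0)"

lemma homogeneous_binary_form: "homogeneous n (binary_form n g)"
  unfolding homogeneous_def binary_form_def by auto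

lemma sect_binary_form: "sect D (binary_form (3 * D) g)"
  unfolding sect_def binary_form_def by auto

lemma binary_form_nonzero:
  "g \<noteq> 0 \<Longrightarrow> degree g \<le> n \<Longrightarrow> binary_form n g (n - degree g) (degree g) 0 \<noteq> 0"
  by (simp add: binary_form_def)

lemma binary_form_if_z_free:
  assumes "homogeneous n F" "\<forall>i j k. F i j k \<noteq> 0 \<longrightarrow> k = 0"
  defines "g \<equiv> \<Sum>j\<le>n. monom (F (n - j) j 0) j"
  shows "F = binary_form n g" "degree g \<le> n"
proof -
  have coeff_g: "coeff g j = (if j \<le> n then F (n - j) j 0 else 0)" for j
    unfolding g_def by (simp add: coeff_sum coeff_monom sum.delta')
  show "F = binary_form n g"
  proof (intro ext)
    fix i j k
    have "F i j k = 0" if "\<not> (k = 0 \<and> i + j = n)"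
      using assms(1,2) that unfolding homogeneous_def by (metis add_0_right)
    then show "F i j k = binary_form n g i j k"
      unfolding binary_form_def coeff_g by auto
  qed
  show "degree g \<le> n" by (rule degree_le) (simp add: coeff_g)
qed

lemma sum_antidiagonal:
  fixes f :: "nat \<Rightarrow> nat \<Rightarrow> complex"
  shows "(\<Sum>i\<le>n. \<Sum>j\<le>n. if i + j = n then f i j else 0) = (\<Sum>j\<le>n. f (n - j) j)"
proof -
  have "(\<Sum>i\<le>n. if i + j = n then f i j else 0) = f (n - j) j" if "j \<le> n" for j
  proof -
    have "(\<Sum>i\<le>n. if i + j = n then f i j else 0) = (\<Sum>i\<le>n. if i = n - j then f i j else 0)"
      using that by (intro sum.cong refl) auto
    then show ?thesis by (simp add: sum.delta')
  qed
  then show ?thesis by (subst sum.swap) simp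
qed

lemma taylor_coeff_binary_form:
  "taylor_coeff n (binary_form n g) a b e (x, y, z) = (if e = 0 then
     (\<Sum>j\<le>n. coeff g j * of_nat ((n - j) choose a) * of_nat (j choose b) * x ^ (n - j - a) * y ^ (j - b))
   else 0)"
proof -
  have "(\<Sum>k\<le>n. binary_form n g i j k * of_nat (i choose a) * of_nat (j choose b) * of_nat (k choose e)
          * x ^ (i - a) * y ^ (j - b) * z ^ (k - e))
      = (if i + j = n then (if e = 0 then coeff g j * of_nat (i choose a) * of_nat (j choose b)
          * x ^ (i - a) * y ^ (j - b) else 0) else 0)" for i j
    by (simp add: binary_form_def if_distrib[of "\<lambda>u. u * _"] sum.delta cong: if_cong)
  then show ?thesis
    unfolding taylor_coeff_def by (simp add: sum_antidiagonal cong: if_cong)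
qed

lemma dehom_binary_form: "dehom n (binary_form n g) i j = (if i + j = n then coeff g j else 0)"
  unfolding dehom_def binary_form_def by (simp add: sum.delta cong: if_cong)

lemma chart_coeff_binary_form:
  assumes "degree g \<le> n"
  shows "chart_coeff n (dehom n (binary_form n g)) \<tau> s t v
       = (if int n = int s + \<tau> then poly_taylor_coeff g v t else 0)"
proof -
  have "chart_coeff n (dehom n (binary_form n g)) \<tau> s t v = (\<Sum>i\<le>n. \<Sum>j\<le>n. if i + j = n then
      (if int n = int s + \<tau> then coeff g j * of_nat (j choose t) * v ^ (j - t) else 0) else 0)"
    unfolding chart_coeff_def dehom_binary_form by (intro sum.cong refl) auto
  also have "\<dots> = (\<Sum>j\<le>n. if int n = int s + \<tau> then coeff g j * of_nat (j choose t) * v ^ (j - t) else 0)"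
    by (rule sum_antidiagonal)
  finally show ?thesis unfolding poly_taylor_coeff_eq_sum[OF assms] by (simp cong: if_cong)
qed

text \<open>binary_taylor g n y a b is the (a, b)-th Taylor coefficient of x^n g(y/x) at (1, y).\<close>
definition binary_taylor :: "complex poly \<Rightarrow> nat \<Rightarrow> complex \<Rightarrow> nat \<Rightarrow> nat \<Rightarrow> complex" where
  "binary_taylor g n y a b =
     (\<Sum>j\<le>n. coeff g j * of_nat ((n - j) choose a) * of_nat (j choose b) * y ^ (j - b))"

text \<open>Euler's identity for the homogeneous polynomial x^n g(y/x).\<close>
lemma binary_taylor_euler:
  "of_nat (Suc a) * binary_taylor g n y (Suc a) b + of_nat (Suc b) * y * binary_taylor g n y a (Suc b)
   = (of_nat n - of_nat a - of_nat b) * binary_taylor g n y a b"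
proof -
  have "of_nat (Suc a) * (coeff g j * of_nat ((n - j) choose Suc a) * of_nat (j choose b) * y ^ (j - b))
      + of_nat (Suc b) * y * (coeff g j * of_nat ((n - j) choose a) * of_nat (j choose Suc b) * y ^ (j - Suc b))
      = (of_nat n - of_nat a - of_nat b)
        * (coeff g j * of_nat ((n - j) choose a) * of_nat (j choose b) * y ^ (j - b))"
    if "j \<le> n" for j
  proof -
    define A where "A = (of_nat ((n - j) choose a) :: complex)"
    define B where "B = of_nat (j choose b) * y ^ (j - b)"
    have x_part: "of_nat (Suc a) * of_nat ((n - j) choose Suc a) = (of_nat (n - j) - of_nat a) * A"
      using binomial_Suc_mult_power[of a 1 "n - j"] unfolding A_def by simp
    have y_part: "of_nat (Suc b) * y * of_nat (j choose Suc b) * y ^ (j - Suc b) = (of_nat j - of_nat b) * B"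
      unfolding B_def using binomial_Suc_mult_power[of b y j] by (simp add: mult.assoc)
    have n: "of_nat n = (of_nat (n - j) + of_nat j :: complex)"
      using that by (simp add: of_nat_diff)
    have "of_nat (Suc a) * (coeff g j * of_nat ((n - j) choose Suc a) * of_nat (j choose b) * y ^ (j - b))
        + of_nat (Suc b) * y * (coeff g j * of_nat ((n - j) choose a) * of_nat (j choose Suc b) * y ^ (j - Suc b))
        = coeff g j * B * (of_nat (Suc a) * of_nat ((n - j) choose Suc a))
          + coeff g j * A * (of_nat (Suc b) * y * of_nat (j choose Suc b) * y ^ (j - Suc b))"
      unfolding A_def B_def by (simp only: ac_simps)
    also have "\<dots> = (of_nat n - of_nat a - of_nat b) * (coeff g j * A * B)"
      unfolding x_part y_part n by (simp add: algebra_simps)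
    finally show ?thesis unfolding A_def B_def by (simp only: ac_simps)
  qed
  then show ?thesis
    unfolding binary_taylor_def sum_distrib_left sum.distrib[symmetric] by (intro sum.cong) simp_all
qed

lemma binary_taylor_vanishing:
  assumes "\<forall>t<M. binary_taylor g n y 0 t = 0"
  shows "a + b < M \<Longrightarrow> binary_taylor g n y a b = 0"
proof (induction a arbitrary: b)
  case 0
  then show ?case using assms by simp
next
  case (Suc a)
  then have "binary_taylor g n y a b = 0" "binary_taylor g n y a (Suc b) = 0" by simp_all
  then have "of_nat (Suc a) * binary_taylor g n y (Suc a) b = 0"
    using binary_taylor_euler[of a g n y b] by simp
  then show ?case by (simp del: of_nat_Suc)
qed

lemma binary_taylor_0: "degree g \<le> n \<Longrightarrow> binary_taylor g n y 0 t = poly_taylor_coeff g y t"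
  unfolding binary_taylor_def poly_taylor_coeff_eq_sum[where n = n] by simp

lemma binomial_mult_zero_power:
  "of_nat (m choose a) * (0::complex) ^ (m - a) = (if m = a then 1 else 0)"
  by (cases "m < a") (auto simp: binomial_eq_0)

lemma top_coeffs_zero_iff_degree:
  fixes g :: "complex poly"
  assumes "g \<noteq> 0" "degree g \<le> n"
  shows "(\<forall>a<E. a \<le> n \<longrightarrow> coeff g (n - a) = 0) \<longleftrightarrow> degree g + E \<le> n"
proof
  assume top: "\<forall>a<E. a \<le> n \<longrightarrow> coeff g (n - a) = 0"
  show "degree g + E \<le> n"
  proof (rule ccontr)
    assume "\<not> degree g + E \<le> n"
    then have "n - degree g < E" "n - degree g \<le> n" using assms(2) by auto
    then have "coeff g (n - (n - degree g)) = 0" using top by blast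
    then show False using assms by simp
  qed
qed (auto intro!: coeff_eq_0)

lemma all_lt_if_eq_0_iff:
  fixes S :: "nat \<Rightarrow> nat \<Rightarrow> complex"
  shows "(\<forall>a b e. a + b + e < M \<longrightarrow> (if e = 0 then S a b else 0) = 0) \<longleftrightarrow> (\<forall>a b. a + b < M \<longrightarrow> S a b = 0)"
proof (intro iffI allI impI)
  fix a b
  assume all: "\<forall>a b e. a + b + e < M \<longrightarrow> (if e = 0 then S a b else 0) = 0" and "a + b < M"
  from \<open>a + b < M\<close> have "a + b + 0 < M" by simp
  with all have "(if (0::nat) = 0 then S a b else 0) = 0" by blast
  then show "S a b = 0" by simp
qed auto

lemma base_order_ge_binary_form_affine:
  assumes "degree g \<le> n"
  shows "base_order_ge n (binary_form n g) M (1, y, z) \<longleftrightarrow> [:-y, 1:] ^ M dvd g"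
proof -
  have "base_order_ge n (binary_form n g) M (1, y, z)
      \<longleftrightarrow> (\<forall>a b. a + b < M \<longrightarrow> binary_taylor g n y a b = 0)"
    unfolding base_order_ge_def taylor_coeff_binary_form binary_taylor_def all_lt_if_eq_0_iff by simp
  also have "\<dots> \<longleftrightarrow> (\<forall>t<M. binary_taylor g n y 0 t = 0)"
    using binary_taylor_vanishing by auto
  also have "\<dots> \<longleftrightarrow> [:-y, 1:] ^ M dvd g"
    by (simp add: binary_taylor_0[OF assms] linear_power_dvd_iff_poly_taylor_coeff)
  finally show ?thesis .
qed

lemma base_order_ge_binary_form_infinity:
  assumes "g \<noteq> 0" "degree g \<le> n"
  shows "base_order_ge n (binary_form n g) M (0, 1, z) \<longleftrightarrow> degree g + M \<le> n"
proof -
  have summand: "coeff g j * of_nat ((n - j) choose a) * of_nat (j choose b) * 0 ^ (n - j - a) * 1 ^ (j - b)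
      = (if j = n - a \<and> a \<le> n then coeff g j * of_nat (j choose b) else 0)" if "j \<le> n" for j a b
    using binomial_mult_zero_power[of "n - j" a] that
    by (auto simp: ac_simps simp del: binomial_eq_0_iff)
  have taylor: "(\<Sum>j\<le>n. coeff g j * of_nat ((n - j) choose a) * of_nat (j choose b) * 0 ^ (n - j - a) * 1 ^ (j - b))
      = (if a \<le> n then coeff g (n - a) * of_nat ((n - a) choose b) else 0)" for a b
  proof -
    have "(\<Sum>j\<le>n. coeff g j * of_nat ((n - j) choose a) * of_nat (j choose b) * 0 ^ (n - j - a) * 1 ^ (j - b))
        = (\<Sum>j\<le>n. if j = n - a \<and> a \<le> n then coeff g j * of_nat (j choose b) else 0)"
      by (intro sum.cong refl summand) simp
    then show ?thesis by (cases "a \<le> n") (simp_all add: sum.delta)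
  qed
  have "base_order_ge n (binary_form n g) M (0, 1, z)
      \<longleftrightarrow> (\<forall>a b. a + b < M \<longrightarrow> (if a \<le> n then coeff g (n - a) * of_nat ((n - a) choose b) else 0) = 0)"
    unfolding base_order_ge_def taylor_coeff_binary_form all_lt_if_eq_0_iff taylor ..
  also have "\<dots> \<longleftrightarrow> (\<forall>a<M. a \<le> n \<longrightarrow> coeff g (n - a) = 0)"
  proof (intro iffI allI impI)
    fix a
    assume all: "\<forall>a b. a + b < M \<longrightarrow> (if a \<le> n then coeff g (n - a) * of_nat ((n - a) choose b) else 0) = 0"
      and "a < M" "a \<le> n"
    then have "a + 0 < M" by simp
    with all have "(if a \<le> n then coeff g (n - a) * of_nat ((n - a) choose 0) else 0) = 0" by blast
    then show "coeff g (n - a) = 0" using \<open>a \<le> n\<close> by simp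
  qed auto
  also have "\<dots> \<longleftrightarrow> degree g + M \<le> n" by (rule top_coeffs_zero_iff_degree[OF assms])
  finally show ?thesis .
qed

lemma chart_coeff_binary_form_swap_xy:
  "chart_coeff n (dehom n (swap_xy (binary_form n g))) \<tau> s t 0
     = (if int n = int s + \<tau> then (if t \<le> n then coeff g (n - t) else 0) else 0)"
proof -
  have "chart_coeff n (dehom n (swap_xy (binary_form n g))) \<tau> s t 0 = (\<Sum>i\<le>n. \<Sum>j\<le>n. if i + j = n then
      (if int n = int s + \<tau> then coeff g i * (of_nat (j choose t) * 0 ^ (j - t)) else 0) else 0)"
    unfolding chart_coeff_def dehom_swap_xy dehom_binary_form
    by (intro sum.cong refl) (auto simp: add.commute)
  also have "\<dots> = (\<Sum>j\<le>n. if int n = int s + \<tau> \<and> j = t then coeff g (n - j) else 0)"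
    unfolding sum_antidiagonal binomial_mult_zero_power by (intro sum.cong refl) auto
  finally show ?thesis by (cases "int n = int s + \<tau>") (simp_all add: sum.delta)
qed

lemma all_lt_chart_iff:
  fixes X :: "nat \<Rightarrow> complex"
  shows "(\<forall>s t. s + t < M \<longrightarrow> (if int (3 * D) = int s + int D then X t else 0) = 0)
     \<longleftrightarrow> (\<forall>t < M - 2 * D. X t = 0)"
proof -
  have "int (3 * D) = int s + int D \<longleftrightarrow> s = 2 * D" for s by linarith
  then have "(\<forall>s t. s + t < M \<longrightarrow> (if int (3 * D) = int s + int D then X t else 0) = 0)
     \<longleftrightarrow> (\<forall>t. 2 * D + t < M \<longrightarrow> X t = 0)"
    by auto
  also have "\<dots> \<longleftrightarrow> (\<forall>t < M - 2 * D. X t = 0)"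
    by (intro all_cong1) linarith
  finally show ?thesis .
qed

lemma chart_order_ge_binary_form_affine:
  assumes "degree g \<le> 3 * D"
  shows "chart_order_ge (3 * D) (dehom (3 * D) (binary_form (3 * D) g)) (int D) M v
     \<longleftrightarrow> [:-v, 1:] ^ (M - 2 * D) dvd g"
  unfolding chart_order_ge_def chart_coeff_binary_form[OF assms] all_lt_chart_iff
    linear_power_dvd_iff_poly_taylor_coeff ..

lemma chart_order_ge_binary_form_infinity:
  assumes "g \<noteq> 0" "degree g \<le> 3 * D"
  shows "chart_order_ge (3 * D) (dehom (3 * D) (swap_xy (binary_form (3 * D) g))) (int D) M 0
     \<longleftrightarrow> degree g + (M - 2 * D) \<le> 3 * D"
proof -
  have "chart_order_ge (3 * D) (dehom (3 * D) (swap_xy (binary_form (3 * D) g))) (int D) M 0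
      \<longleftrightarrow> (\<forall>t < M - 2 * D. (if t \<le> 3 * D then coeff g (3 * D - t) else 0) = 0)"
    unfolding chart_order_ge_def chart_coeff_binary_form_swap_xy by (rule all_lt_chart_iff)
  also have "\<dots> \<longleftrightarrow> (\<forall>t < M - 2 * D. t \<le> 3 * D \<longrightarrow> coeff g (3 * D - t) = 0)"
    by (intro all_cong1) auto
  also have "\<dots> \<longleftrightarrow> degree g + (M - 2 * D) \<le> 3 * D"
    by (rule top_coeffs_zero_iff_degree[OF assms])
  finally show ?thesis .
qed

definition slope :: "s1pt \<Rightarrow> complex option" where
  "slope q = (case q of
      Base (x, y, z) \<Rightarrow> if x \<noteq> 0 then Some (y / x) else None
    | Exc (a, b) \<Rightarrow> if a \<noteq> 0 then Some (b / a) else None)"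

text \<open>For a binary form x^(3D) g(y/x), the divisor f^*F - D E1 consists of the strict transforms
  of the lines through P1 given by the roots of g (and x = 0 with multiplicity 3D - deg g)
  plus 2D E1; so on E1 a root of g of order M - 2D suffices.\<close>
definition required_order :: "nat \<Rightarrow> nat \<Rightarrow> s1pt \<Rightarrow> nat" where
  "required_order D M q = (case q of Base _ \<Rightarrow> M | Exc _ \<Rightarrow> M - 2 * D)"

definition binary_order_ge :: "nat \<Rightarrow> complex poly \<Rightarrow> nat \<Rightarrow> s1pt \<Rightarrow> bool" where
  "binary_order_ge D g M q = (case slope q of
      Some v \<Rightarrow> [:-v, 1:] ^ required_order D M q dvd g
    | None \<Rightarrow> degree g + required_order D M q \<le> 3 * D)"

lemma mult_ge_binary_form_iff:
  assumes q: "valid_pt q" and g: "g \<noteq> 0" "degree g \<le> 3 * D"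
  shows "mult_ge D (binary_form (3 * D) g) M q \<longleftrightarrow> binary_order_ge D g M q"
proof -
  have "mult_ge D (binary_form (3 * D) g) M q \<longleftrightarrow> order_ge (3 * D) (binary_form (3 * D) g) (int D) M q"
    by (rule mult_ge_iff_order_ge[OF homogeneous_binary_form order_refl])
  also have "\<dots> \<longleftrightarrow> binary_order_ge D g M q"
  proof (cases q)
    case (Base p)
    obtain x y z where p: "p = (x, y, z)" by (cases p)
    then have "x = 1 \<or> (x = 0 \<and> y = 1)" using q Base by (auto simp: normP2_def)
    then show ?thesis
      using base_order_ge_binary_form_affine[OF g(2)] base_order_ge_binary_form_infinity[OF g]
      by (auto simp: Base p binary_order_ge_def slope_def required_order_def)
  next
    case (Exc ab)
    obtain a b where ab: "ab = (a, b)" by (cases ab)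
    then have "a = 1 \<or> (a = 0 \<and> b = 1)" using q Exc by (auto simp: normP1_def)
    then show ?thesis
      using chart_order_ge_binary_form_affine[OF g(2)] chart_order_ge_binary_form_infinity[OF g]
      by (auto simp: Exc ab binary_order_ge_def slope_def required_order_def)
  qed
  finally show ?thesis .
qed

section \<open>Counting orders of vanishing over slopes\<close>

lemma sum_option_split:
  assumes "finite A"
  shows "(\<Sum>\<delta>\<in>A. f \<delta>) = (\<Sum>v\<in>Some -` A. f (Some v)) + (if None \<in> A then f None else 0)"
proof -
  have A: "A = Some ` (Some -` A) \<union> (A \<inter> {None})" by (auto elim: option.exhaust_sel)
  have "(\<Sum>\<delta>\<in>A. f \<delta>) = (\<Sum>\<delta>\<in>Some ` (Some -` A). f \<delta>) + (\<Sum>\<delta>\<in>A \<inter> {None}. f \<delta>)"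
    using assms by (subst A, intro sum.union_disjoint) (auto intro: finite_vimageI)
  also have "(\<Sum>\<delta>\<in>Some ` (Some -` A). f \<delta>) = (\<Sum>v\<in>Some -` A. f (Some v))"
    by (subst sum.reindex) auto
  finally show ?thesis by (cases "None \<in> A") auto
qed

lemma sum_root_orders_le_degree:
  fixes p :: "complex poly"
  assumes "p \<noteq> 0" "finite V" "\<And>v. v \<in> V \<Longrightarrow> [:-v, 1:] ^ e v dvd p"
  shows "(\<Sum>v\<in>V. e v) \<le> degree p"
proof -
  have le_order: "e v \<le> order v p" if "v \<in> V" for v
    using assms(1) assms(3)[OF that] by (simp add: order_divides)
  have no_root: "e v = 0" if "v \<in> V" "poly p v \<noteq> 0" for v
    using le_order[OF that(1)] that(2) assms(1) by (simp add: order_root)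
  have "(\<Sum>v\<in>V. e v) = (\<Sum>v\<in>V \<inter> {x. poly p x = 0}. e v)"
    using assms(2) by (intro sum.mono_neutral_right) (auto simp: no_root)
  also have "\<dots> \<le> (\<Sum>v\<in>V \<inter> {x. poly p x = 0}. order v p)"
    using le_order by (intro sum_mono) auto
  also have "\<dots> \<le> (\<Sum>v | poly p v = 0. order v p)"
    using assms(1) by (intro sum_mono2) (auto intro: poly_roots_finite)
  also have "\<dots> \<le> degree p"
    by (rule sum_order_le_degree[OF assms(1)])
  finally show ?thesis .
qed

lemma has_section_if_slope_orders:
  assumes Z: "finite Z" "\<forall>q\<in>Z. valid_pt q"
    and e: "(\<Sum>\<delta>\<in>slope ` Z. e \<delta>) \<le> 3 * D" "\<forall>q\<in>Z. required_order D M q \<le> e (slope q)"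
  shows "has_section Z M D"
proof -
  define V where "V = Some -` slope ` Z"
  define g where "g = (\<Prod>v\<in>V. [:-v, 1:] ^ e (Some v))"
  have g0: "g \<noteq> 0"
    unfolding g_def by (subst prod_zero_iff) (auto simp: V_def Z intro: finite_vimageI)
  have deg: "degree g + (if None \<in> slope ` Z then e None else 0) \<le> 3 * D"
    using e(1) Z(1) unfolding g_def V_def
    by (simp add: sum_option_split degree_prod_eq_sum_degree degree_linear_power)
  have "binary_order_ge D g M q" if "q \<in> Z" for q
  proof (cases "slope q")
    case None
    then show ?thesis
      using deg e(2) that by (force simp: binary_order_ge_def split: if_splits)
  next
    case (Some v)
    then have "v \<in> V" unfolding V_def using that by force
    have "[:-v, 1:] ^ required_order D M q dvd [:-v, 1:] ^ e (Some v)"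
      using e(2) that Some by (intro le_imp_power_dvd) force
    also have "\<dots> dvd g"
      unfolding g_def using \<open>v \<in> V\<close> Z(1) by (intro dvd_prodI) (auto simp: V_def intro: finite_vimageI)
    finally show ?thesis using Some by (simp add: binary_order_ge_def)
  qed
  moreover have "degree g \<le> 3 * D" using deg by simp
  ultimately show ?thesis
    unfolding has_section_def
    using sect_binary_form binary_form_nonzero[OF g0] mult_ge_binary_form_iff[OF _ g0] Z(2) by blast
qed

lemma sum_slope_orders_le:
  assumes Z: "finite Z" and p: "p \<noteq> 0" "degree p \<le> 3 * D" "\<forall>q\<in>Z. binary_order_ge D p M q"
    and e: "\<And>\<delta>. \<delta> \<in> slope ` Z \<Longrightarrow> \<exists>q\<in>Z. slope q = \<delta> \<and> e \<delta> \<le> required_order D M q"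
  shows "(\<Sum>\<delta>\<in>slope ` Z. e \<delta>) \<le> 3 * D"
proof -
  have "(\<Sum>v\<in>Some -` slope ` Z. e (Some v)) \<le> degree p"
  proof (rule sum_root_orders_le_degree[OF p(1)])
    show "finite (Some -` slope ` Z)" using Z by (intro finite_vimageI) auto
  next
    fix v assume "v \<in> Some -` slope ` Z"
    then obtain q where q: "q \<in> Z" "slope q = Some v" "e (Some v) \<le> required_order D M q"
      using e by force
    then have "[:-v, 1:] ^ e (Some v) dvd [:-v, 1:] ^ required_order D M q"
      by (intro le_imp_power_dvd)
    also have "\<dots> dvd p" using p(3) q by (force simp: binary_order_ge_def)
    finally show "[:-v, 1:] ^ e (Some v) dvd p" .
  qed
  moreover have "degree p + e None \<le> 3 * D" if none: "None \<in> slope ` Z"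
  proof -
    obtain q where q: "q \<in> Z" "slope q = None" "e None \<le> required_order D M q"
      using e[OF none] by blast
    then show ?thesis using p(3) by (force simp: binary_order_ge_def)
  qed
  ultimately show ?thesis
    using Z p(2) by (auto simp: sum_option_split)
qed

lemma has_section_exists:
  assumes "finite Z" "\<forall>q\<in>Z. valid_pt q"
  shows "\<exists>d. has_section Z M d"
proof -
  have "has_section Z M (M * card (slope ` Z))"
  proof (rule has_section_if_slope_orders[OF assms, where e = "\<lambda>_. M"])
    show "(\<Sum>\<delta>\<in>slope ` Z. M) \<le> 3 * (M * card (slope ` Z))" by simp
    show "\<forall>q\<in>Z. required_order (M * card (slope ` Z)) M q \<le> M"
      by (simp add: required_order_def split: s1pt.splits)
  qed
  then show ?thesis ..
qed

lemma sum_orders_descent: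
  fixes base :: "'a \<Rightarrow> bool" and d m :: nat
  assumes A: "finite A" and d: "1 \<le> d"
    and sum_F: "(\<Sum>\<delta>\<in>A. if base \<delta> then m + 4 else m + 4 - 2 * d) \<le> 3 * d"
    and not_single: "\<not> (\<exists>\<delta>. A = {\<delta>} \<and> \<not> base \<delta>)"
  shows "(\<Sum>\<delta>\<in>A. if base \<delta> then m else m - 2 * (d - 1)) \<le> 3 * (d - 1)"
proof (rule ccontr)
  define eF where "eF \<delta> = (if base \<delta> then m + 4 else m + 4 - 2 * d)" for \<delta>
  define eG where "eG \<delta> = (if base \<delta> then m else m - 2 * (d - 1))" for \<delta>
  define P where "P = {\<delta>\<in>A. 0 < eG \<delta>}"
  assume "\<not> ?thesis"
  then have big: "3 * d - 2 \<le> (\<Sum>\<delta>\<in>A. eG \<delta>)" unfolding eG_def by linarith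
  have sum_P: "(\<Sum>\<delta>\<in>A. eG \<delta>) = (\<Sum>\<delta>\<in>P. eG \<delta>)"
    unfolding P_def using A by (intro sum.mono_neutral_right) auto
  have "(\<Sum>\<delta>\<in>A. eG \<delta>) + 2 * card P = (\<Sum>\<delta>\<in>A. eG \<delta> + (if 0 < eG \<delta> then 2 else 0))"
    using A by (simp add: P_def sum.distrib sum.inter_filter[symmetric])
  also have "\<dots> \<le> (\<Sum>\<delta>\<in>A. eF \<delta>)"
    unfolding eF_def eG_def by (intro sum_mono) auto
  finally have "(\<Sum>\<delta>\<in>A. eG \<delta>) + 2 * card P \<le> (\<Sum>\<delta>\<in>A. eF \<delta>)" .
  then have "card P \<le> 1" using big sum_F d unfolding eF_def by linarith
  moreover have "P \<noteq> {}"
  proof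
    assume "P = {}"
    then show False using big sum_P d by simp
  qed
  ultimately obtain \<delta>0 where P: "P = {\<delta>0}"
    using A by (metis card_0_eq card_1_singletonE finite_subset le_eq_less_or_eq less_one mem_Collect_eq P_def subsetI)
  then have "\<delta>0 \<in> A" unfolding P_def by auto
  have "eF \<delta>0 \<le> 3 * d"
    using member_le_sum[OF \<open>\<delta>0 \<in> A\<close>, of eF] A sum_F unfolding eF_def by linarith
  moreover have "3 * d - 2 \<le> eG \<delta>0" using big sum_P P by simp
  ultimately have not_base: "\<not> base \<delta>0" and "eF \<delta>0 = 3 * d"
    unfolding eF_def eG_def by (auto split: if_splits)
  then have "3 * d \<le> eF \<delta>" for \<delta> unfolding eF_def by auto
  then have "card A * (3 * d) \<le> (\<Sum>\<delta>\<in>A. eF \<delta>)"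
    using sum_mono[of A "\<lambda>_. 3 * d" eF] by simp
  then have "card A * (3 * d) \<le> 1 * (3 * d)"
    using sum_F unfolding eF_def by linarith
  then have "card A \<le> 1"
    using d by (simp only: mult_le_cancel2)
  then have "A = {\<delta>0}"
    using \<open>\<delta>0 \<in> A\<close> card_le_Suc0_iff_eq[OF A] by auto
  then show False using not_single not_base by blast
qed

lemma exc_eq_if_slope_eq:
  "valid_pt (Exc a) \<Longrightarrow> valid_pt (Exc b) \<Longrightarrow> slope (Exc a) = slope (Exc b) \<Longrightarrow> a = b"
  by (cases a, cases b) (auto simp: normP1_def slope_def split: if_splits)

lemma singleton_if_exceptional_one_slope:
  assumes "\<forall>q\<in>Z. valid_pt q" "\<forall>q\<in>Z. \<exists>ab. q = Exc ab" "slope ` Z = {\<delta>}"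
  shows "\<exists>q. Z = {q}"
proof -
  have slope: "slope q = \<delta>" if "q \<in> Z" for q
    using that assms(3) by (metis imageI singletonD)
  have "Z \<noteq> {}" using assms(3) by auto
  then obtain q0 where "q0 \<in> Z" by blast
  have "q = q0" if q: "q \<in> Z" for q
  proof -
    obtain a b where ab: "q = Exc a" "q0 = Exc b" using assms(2) q \<open>q0 \<in> Z\<close> by meson
    moreover have "valid_pt (Exc a)" "valid_pt (Exc b)"
      using assms(1) q \<open>q0 \<in> Z\<close> unfolding ab by blast+
    ultimately show ?thesis
      using exc_eq_if_slope_eq slope[OF q] slope[OF \<open>q0 \<in> Z\<close>] by blast
  qed
  then show ?thesis using \<open>q0 \<in> Z\<close> by blast
qed

lemma has_section_if_binary:
  assumes Z: "finite Z" "\<forall>q\<in>Z. valid_pt q" "\<nexists>q. Z = {q}" and d: "1 \<le> d"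
    and F: "sect d F" "F i j k \<noteq> 0" "\<forall>i j k. F i j k \<noteq> 0 \<longrightarrow> k = 0" "\<forall>q\<in>Z. mult_ge d F (m + 4) q"
  shows "has_section Z m (d - 1)"
proof -
  define p where "p = (\<Sum>j\<le>3 * d. monom (F (3 * d - j) j 0) j)"
  have hom: "homogeneous (3 * d) F" using F(1) by (simp add: sect_iff_homogeneous)
  have Fp: "F = binary_form (3 * d) p" and deg: "degree p \<le> 3 * d"
    unfolding p_def by (rule binary_form_if_z_free[OF hom F(3)])+
  have p0: "p \<noteq> 0" using F(2) unfolding Fp binary_form_def by (auto split: if_splits)
  have order_p: "\<forall>q\<in>Z. binary_order_ge d p (m + 4) q"
    using F(4) Z(2) mult_ge_binary_form_iff[OF _ p0 deg] unfolding Fp by blast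
  define base where "base \<delta> \<longleftrightarrow> (\<exists>x. Base x \<in> Z \<and> slope (Base x) = \<delta>)" for \<delta>
  have sum_F: "(\<Sum>\<delta>\<in>slope ` Z. if base \<delta> then m + 4 else m + 4 - 2 * d) \<le> 3 * d"
  proof (rule sum_slope_orders_le[OF Z(1) p0 deg order_p])
    fix \<delta> assume "\<delta> \<in> slope ` Z"
    then obtain q where q: "q \<in> Z" "slope q = \<delta>" by blast
    show "\<exists>q\<in>Z. slope q = \<delta> \<and> (if base \<delta> then m + 4 else m + 4 - 2 * d) \<le> required_order d (m + 4) q"
    proof (cases "base \<delta>")
      case True
      then show ?thesis unfolding base_def by (auto simp: required_order_def)
    next
      case False
      then show ?thesis using q unfolding base_def by (cases q) (auto simp: required_order_def)
    qed
  qed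
  have not_single: "\<not> (\<exists>\<delta>. slope ` Z = {\<delta>} \<and> \<not> base \<delta>)"
  proof
    assume "\<exists>\<delta>. slope ` Z = {\<delta>} \<and> \<not> base \<delta>"
    then obtain \<delta> where \<delta>: "slope ` Z = {\<delta>}" "\<not> base \<delta>" by blast
    have "\<exists>ab. q = Exc ab" if "q \<in> Z" for q
    proof (cases q)
      case (Base x)
      then have "base \<delta>" using that \<delta>(1) unfolding base_def by blast
      then show ?thesis using \<delta>(2) by contradiction
    qed simp
    then show False using singleton_if_exceptional_one_slope[OF Z(2) _ \<delta>(1)] Z(3) by blast
  qed
  have "(\<Sum>\<delta>\<in>slope ` Z. if base \<delta> then m else m - 2 * (d - 1)) \<le> 3 * (d - 1)"
    using Z(1) by (intro sum_orders_descent[OF _ d sum_F not_single]) simp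
  moreover have "\<forall>q\<in>Z. required_order (d - 1) m q \<le> (if base (slope q) then m else m - 2 * (d - 1))"
    unfolding base_def required_order_def by (auto split: s1pt.splits)
  ultimately show ?thesis by (rule has_section_if_slope_orders[OF Z(1,2)])
qed

lemma order_ge_degree_0:
  assumes "order_ge 0 c 0 M q" "0 < M"
  shows "c 0 0 0 = 0"
proof (cases "(0::nat, c, 0::int, M, q)" rule: order_ge.cases)
  case (1 N c' \<tau> M' p)
  then have "taylor_coeff 0 c 0 0 0 p = 0" using assms by (simp add: base_order_ge_def)
  then show ?thesis by (cases p) (simp add: taylor_coeff_def)
next
  case (2 N c' \<tau> M' a b)
  then have "chart_coeff 0 (dehom 0 c) 0 0 0 (b / a) = 0 \<or> chart_coeff 0 (dehom 0 (swap_xy c)) 0 0 0 (a / b) = 0"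
    using assms by (simp add: chart_order_ge_def split: if_splits)
  then show ?thesis by (auto simp: chart_coeff_def dehom_def swap_xy_def)
qed

lemma has_section_pos:
  assumes "Z \<noteq> {}" "0 < M" "has_section Z M d"
  shows "1 \<le> d"
proof (rule ccontr)
  assume "\<not> 1 \<le> d"
  then have "d = 0" by simp
  then obtain c where c: "sect 0 c" "\<exists>i j k. c i j k \<noteq> 0" "\<forall>q\<in>Z. mult_ge 0 c M q"
    using assms(3) unfolding has_section_def \<open>d = 0\<close> by blast
  have hom: "homogeneous 0 c" using c(1) by (simp add: sect_iff_homogeneous)
  obtain q where "q \<in> Z" using assms(1) by blast
  then have "c 0 0 0 = 0"
    using c(3) mult_ge_iff_order_ge[of 0 c 0] hom order_ge_degree_0 assms(2) by auto
  moreover obtain i j k where "c i j k \<noteq> 0" using c(2) by blast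
  moreover have "i = 0" "j = 0" "k = 0"
    using hom \<open>c i j k \<noteq> 0\<close> unfolding homogeneous_def by auto
  ultimately show False by simp
qed

lemma has_section_descent:
  assumes Z: "finite Z" "\<forall>q\<in>Z. valid_pt q" "\<nexists>q. Z = {q}"
    and d: "1 \<le> d" and sec: "has_section Z (m + 4) d"
  shows "has_section Z m (d - 1)"
proof -
  obtain F i j k where F: "sect d F" "F i j k \<noteq> 0" "\<forall>q\<in>Z. mult_ge d F (m + 4) q"
    using sec unfolding has_section_def by blast
  show ?thesis
  proof (cases "\<forall>i j k. F i j k \<noteq> 0 \<longrightarrow> k = 0")
    case True
    then show ?thesis by (rule has_section_if_binary[OF Z d F(1,2) _ F(3)])
  next
    case False
    then obtain i' j' k' where "F i' j' k' \<noteq> 0" "k' \<noteq> 0" by blast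
    then show ?thesis by (rule has_section_if_depends_on_z[OF d F(1,3)])
  qed
qed

theorem mainTheorem2:
  fixes Z :: "s1pt set" and m :: nat
  assumes "finite Z" and "Z \<noteq> {}" and "\<forall>q\<in>Z. valid_pt q"
    and "m \<ge> 1"
    and "alpha Z m = alpha Z (m + 1)" and "alpha Z (m + 1) = alpha Z (m + 2)"
    and "alpha Z (m + 2) = alpha Z (m + 3)" and "alpha Z (m + 3) = alpha Z (m + 4)"
  shows "\<exists>q. Z = {q}"
proof (rule ccontr)
  assume not_single: "\<nexists>q. Z = {q}"
  define d where "d = alpha Z (m + 4)"
  have sec: "has_section Z (m + 4) d"
    unfolding d_def alpha_eq_Least using has_section_exists[OF assms(1,3)] by (rule LeastI_ex)
  then have "1 \<le> d" by (rule has_section_pos[OF assms(2), rotated]) simp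
  then have "has_section Z m (d - 1)"
    using has_section_descent[OF assms(1,3) not_single _ sec] by blast
  then have "alpha Z m \<le> d - 1" unfolding alpha_eq_Least by (rule Least_le)
  moreover have "alpha Z m = d" using assms(5-8) unfolding d_def by simp
  ultimately show False using \<open>1 \<le> d\<close> by simp
qed

end
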